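(* For every integer $n\ge0$ with $n\ne3$ we have $\tilde b(TP_n)\le 2^{n/4}$. Furthermore $\tilde b(TP_3)=2$.
   Context: The triangular path $TP_n$ is the graph with vertex set $[n]$ in which $i\ne j$ are adjacent iff $|i-j|\le2$; $TP_0$ is the empty graph. $\mathrm{Ind}(G)$ is the independence complex of $G$ (including the empty face), and $\tilde b(G)=\sum_{i\ge-1}\dim_{\mathbb{K}}\widetilde H_i(\mathrm{Ind}(G);\mathbb{K})$ for a fixed field $\mathbb{K}$. *)

theory Defs
  imports Complex_Main "HOL-Library.Function_Algebras"
begin

definition tp_adj :: "nat \<Rightarrow> nat \<Rightarrow> bool" where
  "tp_adj i j = (i \<noteq> j \<and> \<bar>int i - int j\<bar> \<le> 2)"

text \<open>Triangular path TP_n: vertex set {1..n}, adjacency tp_adj.\<close>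

definition indep_complex :: "nat set \<Rightarrow> (nat \<Rightarrow> nat \<Rightarrow> bool) \<Rightarrow> nat set set" where
  "indep_complex V E = {S. S \<subseteq> V \<and> (\<forall>x\<in>S. \<forall>y\<in>S. \<not> E x y)}"

text \<open>Chains of a simplicial complex F (a set of finite vertex sets, including the
empty face) with coefficients in a field: functions supported on faces with k vertices,
i.e. the augmented chain group in degree k-1. Simplices are oriented by the order on nat.\<close>

definition chains :: "nat set set \<Rightarrow> nat \<Rightarrow> (nat set \<Rightarrow> 'k::field) set" where
  "chains F k = {f. \<forall>\<sigma>. f \<sigma> \<noteq> 0 \<longrightarrow> \<sigma> \<in> F \<and> card \<sigma> = k}"

text \<open>Augmented simplicial boundary:
  d[v_0<...<v_k] = sum_i (-1)^i [v_0..^v_i..v_k], with d[v] = [empty].\<close>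

definition bd :: "nat set set \<Rightarrow> (nat set \<Rightarrow> 'k::field) \<Rightarrow> (nat set \<Rightarrow> 'k)" where
  "bd F f \<tau> = (\<Sum>v\<in>{v. v \<notin> \<tau> \<and> insert v \<tau> \<in> F}.
       (-1) ^ card {u\<in>\<tau>. u < v} * f (insert v \<tau>))"

definition fscale :: "'k::field \<Rightarrow> (nat set \<Rightarrow> 'k) \<Rightarrow> (nat set \<Rightarrow> 'k)" where
  "fscale c f = (\<lambda>x. c * f x)"

text \<open>dim_K of the reduced homology group H~_{k-1}(F;K) = ker d_k / im d_{k+1}.\<close>

definition red_betti :: "'k::field itself \<Rightarrow> nat set set \<Rightarrow> nat \<Rightarrow> nat" where
  "red_betti _ F k =
     vector_space.dim (fscale :: 'k \<Rightarrow> _) {f \<in> (chains F k :: (nat set \<Rightarrow> 'k) set). bd F f = 0}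
     - vector_space.dim (fscale :: 'k \<Rightarrow> _) (bd F ` (chains F (Suc k) :: (nat set \<Rightarrow> 'k) set))"

text \<open>b~(G) = sum over i >= -1 of dim H~_i(Ind G; K). Faces have at most card V
vertices, so degrees k-1 with k \<le> card V exhaust all nonzero groups.\<close>

definition total_red_betti :: "'k::field itself \<Rightarrow> nat set \<Rightarrow> (nat \<Rightarrow> nat \<Rightarrow> bool) \<Rightarrow> nat" where
  "total_red_betti K V E = (\<Sum>k\<in>{0..card V}. red_betti K (indep_complex V E) k)"

end

(* For a vertex v of a graph G, the independence complex of G - v is a subcomplex of
   Ind(G), and the quotient is the suspension of the independence complex of G - N[v].
   Half of the long exact homology sequence gives b(G) <= b(G - v) + b(G - N[v]); a vertex
   without neighbours is a cone point, whose presence kills all reduced homology.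
   In TP_n, removing the vertices 4, 1, 5, 2 in turn and discarding the cones leaves
   b(TP_n) <= b(TP_(n-4)) + b(TP_(n-5)) for n >= 3.  As 2^(-1) + 2^(-5/4) <= 1, the bound
   2^(n/4) propagates from the base cases n = 0, 1, 2, 4, 7, 8.  Ind(TP_3) consists of three
   points, and two differences of points are independent reduced 0-cycles. *)

theory Submission
  imports Defs
begin

section \<open>Dimensions of subquotients\<close>

context vector_space begin

lemma dim_mono_in_span:
  assumes "S \<subseteq> T" "T \<subseteq> span W" "finite W"
  shows "dim S \<le> dim T"
proof -
  obtain A where A: "A \<subseteq> S" "independent A" "S \<subseteq> span A" "card A = dim S"
    by (rule basis_exists)
  obtain B where B: "B \<subseteq> T" "independent B" "T \<subseteq> span B" "card B = dim T"
    by (rule basis_exists)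
  have "finite B"
    using independent_span_bound[OF assms(3) B(2)] B(1) assms(2) by blast
  moreover have "A \<subseteq> span B" using A(1) assms(1) B(3) by blast
  ultimately show ?thesis using independent_span_bound A B by metis
qed

lemma obtain_complement_basis:
  assumes "subspace B" "B \<subseteq> Z" "Z \<subseteq> span W" "finite W"
  obtains H where "finite H" "H \<subseteq> Z" "card H = dim Z - dim B"
    "\<And>z. z \<in> Z \<Longrightarrow> \<exists>b\<in>B. z - b \<in> span H"
proof -
  obtain A where A: "A \<subseteq> B" "independent A" "B \<subseteq> span A" "card A = dim B"
    by (rule basis_exists)
  obtain C where C: "A \<subseteq> C" "C \<subseteq> Z" "independent C" "Z \<subseteq> span C"
    using maximal_independent_subset_extend[of A Z] A assms(2) by blast
  have fC: "finite C" using independent_span_bound[OF assms(4) C(3)] C(2) assms(3) by blast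
  have "card (C - A) = dim Z - dim B"
    using card_Diff_subset[OF finite_subset[OF C(1) fC] C(1)] basis_card_eq_dim[OF C(2,4,3)] A(4)
    by simp
  moreover have "\<exists>b\<in>B. z - b \<in> span (C - A)" if z: "z \<in> Z" for z
  proof -
    have "z \<in> span (A \<union> (C - A))" using z C(1,4) Un_Diff_cancel2 sup.absorb2 by fastforce
    then obtain x y where "z = x + y" "x \<in> span A" "y \<in> span (C - A)"
      unfolding span_Un by blast
    moreover have "x \<in> B" using \<open>x \<in> span A\<close> span_minimal[OF A(1) assms(1)] by blast
    ultimately show ?thesis by (intro bexI[of _ x]) (auto simp: algebra_simps)
  qed
  ultimately show ?thesis using that fC C(2) by blast
qed

lemma dim_le_dim_add_card:
  assumes "\<And>x. x \<in> X \<Longrightarrow> \<exists>b\<in>B. x - b \<in> span H" "finite H" "B \<subseteq> span W" "finite W"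
  shows "dim X \<le> dim B + card H"
proof -
  obtain A where A: "A \<subseteq> B" "independent A" "B \<subseteq> span A" "card A = dim B"
    by (rule basis_exists)
  have fA: "finite A" using independent_span_bound[OF assms(4) A(2)] A(1) assms(3) by blast
  have "X \<subseteq> span (A \<union> H)"
  proof
    fix x assume "x \<in> X"
    then obtain b where b: "b \<in> B" "x - b \<in> span H" using assms(1) by blast
    have "b \<in> span (A \<union> H)" "x - b \<in> span (A \<union> H)"
      using b A(3) span_mono[of A "A \<union> H"] span_mono[of H "A \<union> H"] by auto
    then have "b + (x - b) \<in> span (A \<union> H)" by (rule span_add)
    then show "x \<in> span (A \<union> H)" by simp
  qed
  then have "dim X \<le> card (A \<union> H)" using dim_le_card fA assms(2) by blast
  also have "\<dots> \<le> card A + card H" by (rule card_Un_le)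
  finally show ?thesis using A by simp
qed

lemma obtain_lift_mod_subspace:
  assumes lin: "Vector_Spaces.linear scale scale P" and "subspace B" "subspace Z" "finite H"
    and lifts: "\<And>y. y \<in> H \<Longrightarrow> \<exists>z\<in>Z. P z - y \<in> B"
  obtains T where "finite T" "card T \<le> card H" "span T \<subseteq> Z"
    "\<And>w. w \<in> span H \<Longrightarrow> \<exists>t\<in>span T. P t - w \<in> B"
proof -
  interpret P: Vector_Spaces.linear scale scale P by (rule lin)
  obtain lift where lift: "\<And>y. y \<in> H \<Longrightarrow> lift y \<in> Z \<and> P (lift y) - y \<in> B"
    using lifts by metis
  have "\<exists>t\<in>span (lift ` H). P t - w \<in> B" if "w \<in> span H" for w
    using that
  proof (induction rule: span_induct_alt)
    case base
    show ?case using subspace_0[OF \<open>subspace B\<close>] P.zero span_zero by (metis diff_zero)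
  next
    case (step c y w)
    then obtain t where t: "t \<in> span (lift ` H)" "P t - w \<in> B" by blast
    have "c *s lift y + t \<in> span (lift ` H)"
      using step(1) by (intro span_add[OF span_scale[OF span_base] t(1)]) simp
    moreover have "P (c *s lift y + t) - (c *s y + w) = c *s (P (lift y) - y) + (P t - w)"
      by (simp add: P.add P.scale scale_right_diff_distrib)
    moreover have "c *s (P (lift y) - y) + (P t - w) \<in> B"
      using lift[OF step(1)] t(2) \<open>subspace B\<close> by (simp add: subspace_add subspace_scale)
    ultimately show ?case by metis
  qed
  moreover have "span (lift ` H) \<subseteq> Z" using lift span_minimal[OF _ \<open>subspace Z\<close>] by blast
  ultimately show ?thesis using that \<open>finite H\<close> card_image_le by blast
qed

text \<open>Read \<open>ZX/BX\<close>, \<open>ZD/BD\<close>, \<open>ZL/BL\<close> as homology groups: if the sequence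
  \<open>H(D) \<rightarrow> H(X) \<rightarrow> H(L)\<close> induced by \<open>ZD \<subseteq> ZX\<close> and \<open>P\<close> is exact in the middle, then
  \<open>dim H(X) \<le> dim H(D) + dim H(L)\<close>.\<close>

lemma dim_quotient_le_of_exact:
  assumes lin: "Vector_Spaces.linear scale scale P"
    and sub: "subspace ZX" "subspace BX" "subspace BD" "subspace ZL" "subspace BL"
    and incl: "BX \<subseteq> ZX" "BD \<subseteq> ZD" "BL \<subseteq> ZL" "BD \<subseteq> BX" "P ` ZX \<subseteq> ZL"
    and exact: "\<And>z. z \<in> ZX \<Longrightarrow> P z \<in> BL \<Longrightarrow> \<exists>b\<in>BX. z - b \<in> ZD"
    and fin: "finite W" "ZX \<subseteq> span W" "ZD \<subseteq> span W" "ZL \<subseteq> span W"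
  shows "dim ZX - dim BX \<le> (dim ZD - dim BD) + (dim ZL - dim BL)"
proof -
  interpret P: Vector_Spaces.linear scale scale P by (rule lin)
  obtain HD where HD: "finite HD" "card HD = dim ZD - dim BD"
    "\<And>z. z \<in> ZD \<Longrightarrow> \<exists>b\<in>BD. z - b \<in> span HD"
    using obtain_complement_basis[OF sub(3) incl(2) fin(3,1)] by metis
  define U where "U = {x + b | x b. x \<in> P ` ZX \<and> b \<in> BL}"
  have U: "subspace U" "BL \<subseteq> U" "U \<subseteq> ZL"
  proof -
    show "subspace U" unfolding U_def by (intro subspace_sums P.subspace_image sub)
    show "BL \<subseteq> U" unfolding U_def using subspace_0[OF sub(1)] P.zero by force
    show "U \<subseteq> ZL" unfolding U_def using incl(3,5) subspace_add[OF sub(4)] by blast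
  qed
  obtain HU where HU: "finite HU" "HU \<subseteq> U" "card HU = dim U - dim BL"
    "\<And>y. y \<in> U \<Longrightarrow> \<exists>b\<in>BL. y - b \<in> span HU"
    using obtain_complement_basis[OF sub(5) U(2)] U(3) fin(4,1) by (metis order_trans)
  have "\<exists>z\<in>ZX. P z - y \<in> BL" if y: "y \<in> HU" for y
  proof -
    obtain z b where "y = P z + b" "z \<in> ZX" "b \<in> BL" using y HU(2) unfolding U_def by blast
    then show ?thesis using subspace_neg[OF sub(5)] by force
  qed
  then obtain T where T: "finite T" "card T \<le> card HU" "span T \<subseteq> ZX"
    "\<And>w. w \<in> span HU \<Longrightarrow> \<exists>t\<in>span T. P t - w \<in> BL"
    using obtain_lift_mod_subspace[OF lin sub(5,1) HU(1)] by metis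
  have "\<exists>b\<in>BX. z - b \<in> span (HD \<union> T)" if z: "z \<in> ZX" for z
  proof -
    have "P z \<in> U" unfolding U_def using z subspace_0[OF sub(5)] by force
    then obtain b1 where b1: "b1 \<in> BL" "P z - b1 \<in> span HU" using HU(4) by blast
    then obtain t where t: "t \<in> span T" "P t - (P z - b1) \<in> BL" using T(4) by blast
    have "P (z - t) = b1 - (P t - (P z - b1))" by (simp add: P.diff)
    then have "P (z - t) \<in> BL" using subspace_diff[OF sub(5) b1(1) t(2)] by simp
    moreover have "z - t \<in> ZX" using z t(1) T(3) subspace_diff[OF sub(1)] by blast
    ultimately obtain b where b: "b \<in> BX" "z - t - b \<in> ZD" using exact by blast
    then obtain bD where bD: "bD \<in> BD" "z - t - b - bD \<in> span HD" using HD(3) by blast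
    have "t \<in> span (HD \<union> T)" "z - t - b - bD \<in> span (HD \<union> T)"
      using t(1) bD(2) span_mono[of T "HD \<union> T"] span_mono[of HD "HD \<union> T"] by auto
    then have "t + (z - t - b - bD) \<in> span (HD \<union> T)" by (rule span_add)
    moreover have "b + bD \<in> BX" using b(1) bD(1) incl(4) subspace_add[OF sub(2)] by blast
    ultimately show ?thesis by (intro bexI[of _ "b + bD"]) (simp_all add: algebra_simps)
  qed
  then have "dim ZX \<le> dim BX + card (HD \<union> T)"
    by (rule dim_le_dim_add_card[where W=W]) (use HD(1) T(1) incl(1) fin(1,2) in auto)
  moreover have "card (HD \<union> T) \<le> card HD + card HU" using card_Un_le[of HD T] T(2) by linarith
  moreover have "dim U \<le> dim ZL" using dim_mono_in_span[OF U(3) fin(4,1)] .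
  ultimately show ?thesis using HD(2) HU(3) by linarith
qed

end

section \<open>Simplicial chains and reduced Betti numbers\<close>

interpretation fs: vector_space "fscale :: 'k::field \<Rightarrow> (nat set \<Rightarrow> 'k) \<Rightarrow> _"
  by unfold_locales (auto simp: fscale_def algebra_simps fun_eq_iff)

definition ins_sign :: "nat set \<Rightarrow> nat \<Rightarrow> 'k::field" where
  "ins_sign \<tau> w = (-1) ^ card {u\<in>\<tau>. u < w}"

lemma ins_sign_mult_self [simp]: "ins_sign \<tau> w * ins_sign \<tau> w = (1::'k::field)"
  by (simp add: ins_sign_def power_mult_distrib[symmetric])

lemma ins_sign_empty [simp]: "ins_sign {} w = 1"
  by (simp add: ins_sign_def)

lemma ins_sign_insert:
  assumes "finite \<tau>" "v \<notin> \<tau>"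
  shows "(ins_sign (insert v \<tau>) w :: 'k::field) = (if v < w then - ins_sign \<tau> w else ins_sign \<tau> w)"
proof -
  have "{u\<in>insert v \<tau>. u < w} = (if v < w then insert v {u\<in>\<tau>. u < w} else {u\<in>\<tau>. u < w})"
    by auto
  then show ?thesis using assms by (simp add: ins_sign_def)
qed

lemma bd_eq_sum_ins_sign:
  "bd F f \<tau> = (\<Sum>v\<in>{v. v \<notin> \<tau> \<and> insert v \<tau> \<in> F}. ins_sign \<tau> v * f (insert v \<tau>))"
  by (simp add: bd_def ins_sign_def)

definition simplicial_complex :: "nat set \<Rightarrow> nat set set \<Rightarrow> bool" where
  "simplicial_complex V F \<longleftrightarrow> finite V \<and> F \<subseteq> Pow V \<and> (\<forall>\<sigma> \<tau>. \<sigma> \<in> F \<longrightarrow> \<tau> \<subseteq> \<sigma> \<longrightarrow> \<tau> \<in> F)"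

lemma simplicial_complex_indep_complex: "finite V \<Longrightarrow> simplicial_complex V (indep_complex V E)"
  by (auto simp: simplicial_complex_def indep_complex_def)

context
  fixes V F assumes cx: "simplicial_complex V F"
begin

lemma finite_faces: "finite F"
  using cx unfolding simplicial_complex_def by (meson finite_Pow_iff finite_subset)

lemma finite_face: "\<sigma> \<in> F \<Longrightarrow> finite \<sigma>"
  using cx unfolding simplicial_complex_def by (meson PowD finite_subset subsetD)

lemma face_subset: "\<sigma> \<in> F \<Longrightarrow> \<tau> \<subseteq> \<sigma> \<Longrightarrow> \<tau> \<in> F"
  using cx unfolding simplicial_complex_def by blast

lemma finite_extensions: "finite {v. v \<notin> \<tau> \<and> insert v \<tau> \<in> F}"
  using cx unfolding simplicial_complex_def by (auto intro: finite_subset[of _ V])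

end

lemma linear_bd: "Vector_Spaces.linear fscale fscale (bd F :: (nat set \<Rightarrow> 'k::field) \<Rightarrow> _)"
  by unfold_locales
    (simp_all add: fun_eq_iff bd_def fscale_def algebra_simps sum.distrib sum_distrib_left)

lemma bd_zero [simp]: "bd F 0 = 0"
  by (simp add: bd_def fun_eq_iff)

lemma chains_subspace: "fs.subspace (chains F k :: (nat set \<Rightarrow> 'k::field) set)"
  unfolding fs.subspace_def chains_def fscale_def by (auto, (metis add.left_neutral)+)

definition face_chain :: "nat set \<Rightarrow> nat set \<Rightarrow> 'k::field" where
  "face_chain \<sigma> = (\<lambda>\<tau>. if \<tau> = \<sigma> then 1 else 0)"

lemma in_span_face_chains:
  assumes "finite G" "\<And>\<sigma>. f \<sigma> \<noteq> 0 \<Longrightarrow> \<sigma> \<in> G"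
  shows "f \<in> fs.span (face_chain ` G)"
  using assms
proof (induction G arbitrary: f rule: finite_induct)
  case empty
  then have "f = 0" by (auto simp: fun_eq_iff)
  then show ?case using fs.span_zero by metis
next
  case (insert \<sigma> G)
  have "f(\<sigma> := 0) \<in> fs.span (face_chain ` G)"
    using insert.prems by (intro insert.IH) (force split: if_splits)
  then have "f(\<sigma> := 0) \<in> fs.span (face_chain ` insert \<sigma> G)"
    using fs.span_mono[of "face_chain ` G" "face_chain ` insert \<sigma> G"] by blast
  moreover have "fscale (f \<sigma>) (face_chain \<sigma>) \<in> fs.span (face_chain ` insert \<sigma> G)"
    by (intro fs.span_scale fs.span_base) simp
  moreover have "f = f(\<sigma> := 0) + fscale (f \<sigma>) (face_chain \<sigma>)"
    by (auto simp: fun_eq_iff fscale_def face_chain_def)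
  ultimately show ?case by (metis fs.span_add)
qed

lemma chains_subset_span: "finite G \<Longrightarrow> F \<subseteq> G \<Longrightarrow> chains F k \<subseteq> fs.span (face_chain ` G)"
  by (auto simp: chains_def intro!: in_span_face_chains)

lemma bd_chains:
  assumes "simplicial_complex V F" "f \<in> chains F (Suc k)"
  shows "bd F f \<in> chains F k"
  unfolding chains_def
proof (intro CollectI allI impI)
  fix \<tau> assume "bd F f \<tau> \<noteq> 0"
  then obtain v where v: "v \<notin> \<tau>" "insert v \<tau> \<in> F" "f (insert v \<tau>) \<noteq> 0"
    unfolding bd_def by (metis (mono_tags, lifting) mem_Collect_eq mult_zero_right sum.neutral)
  then have "card (insert v \<tau>) = Suc k" using assms(2) by (auto simp: chains_def)
  then show "\<tau> \<in> F \<and> card \<tau> = k"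
    using v finite_face[OF assms(1) v(2)] face_subset[OF assms(1) v(2)] by auto
qed

text \<open>The two ways of adding two vertices v, w to a face carry opposite signs, so the
  terms of \<open>\<partial>\<partial>f\<close> cancel in pairs.\<close>

lemma bd_bd:
  assumes cx: "simplicial_complex V F"
  shows "bd F (bd F f) = (0 :: nat set \<Rightarrow> 'k::field)"
proof
  fix \<tau>
  define A where "A = (\<lambda>t. {v. v \<notin> t \<and> insert v t \<in> F})"
  define g where "g = (\<lambda>v w. ins_sign \<tau> v * ins_sign (insert v \<tau>) w * (f (insert w (insert v \<tau>)) :: 'k))"
  define P where "P = Sigma (A \<tau>) (\<lambda>v. A (insert v \<tau>))"
  have finA: "finite (A t)" for t using finite_extensions[OF cx] A_def by simp
  have mem: "(v, w) \<in> P \<longleftrightarrow> v \<notin> \<tau> \<and> w \<notin> \<tau> \<and> v \<noteq> w \<and> insert w (insert v \<tau>) \<in> F" for v w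
    unfolding P_def A_def using face_subset[OF cx, of "insert w (insert v \<tau>)" "insert v \<tau>"] by auto
  define P1 where "P1 = {p\<in>P. fst p < snd p}"
  have finP1: "finite P1" unfolding P1_def P_def using finA by auto
  have P: "P = P1 \<union> prod.swap ` P1" "P1 \<inter> prod.swap ` P1 = {}"
    unfolding P1_def using mem by (auto simp: insert_commute linorder_neq_iff image_iff)
  have g_swap: "g w v = - g v w" if "(v, w) \<in> P1" for v w
  proof -
    have m: "v \<notin> \<tau>" "w \<notin> \<tau>" "v \<noteq> w" "insert w (insert v \<tau>) \<in> F"
      using that mem unfolding P1_def by auto
    then have "finite \<tau>" using finite_face[OF cx m(4)] by simp
    then show ?thesis using m by (cases "v < w") (auto simp: g_def ins_sign_insert insert_commute)
  qed
  have "bd F (bd F f) \<tau> = (\<Sum>v\<in>A \<tau>. \<Sum>w\<in>A (insert v \<tau>). g v w)"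
    by (simp add: bd_eq_sum_ins_sign A_def g_def sum_distrib_left mult.assoc)
  also have "\<dots> = (\<Sum>p\<in>P. case_prod g p)" unfolding P_def by (rule sum.Sigma) (use finA in auto)
  also have "\<dots> = (\<Sum>p\<in>P1. case_prod g p) + (\<Sum>p\<in>prod.swap ` P1. case_prod g p)"
    unfolding P(1) by (rule sum.union_disjoint) (use finP1 P(2) in auto)
  also have "\<dots> = (\<Sum>p\<in>P1. case_prod g p) + (\<Sum>p\<in>P1. case_prod g (prod.swap p))"
    by (simp add: sum.reindex)
  also have "\<dots> = (\<Sum>p\<in>P1. case_prod g p) + (\<Sum>p\<in>P1. - case_prod g p)"
    by (intro arg_cong2[where f="(+)"] sum.cong) (auto simp: g_swap)
  also have "\<dots> = 0" by (simp add: sum_negf)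
  finally show "bd F (bd F f) \<tau> = 0 \<tau>" by simp
qed

definition cycles :: "nat set set \<Rightarrow> nat \<Rightarrow> (nat set \<Rightarrow> 'k::field) set" where
  "cycles F k = {f \<in> chains F k. bd F f = 0}"

definition boundaries :: "nat set set \<Rightarrow> nat \<Rightarrow> (nat set \<Rightarrow> 'k::field) set" where
  "boundaries F k = bd F ` chains F (Suc k)"

lemma red_betti_eq:
  "red_betti TYPE('k::field) F k =
     fs.dim (cycles F k :: (nat set \<Rightarrow> 'k) set) - fs.dim (boundaries F k :: (nat set \<Rightarrow> 'k) set)"
  by (simp add: red_betti_def cycles_def boundaries_def)

lemma cycles_subspace: "fs.subspace (cycles F k :: (nat set \<Rightarrow> 'k::field) set)"
proof -
  interpret bd: Vector_Spaces.linear fscale fscale "bd F :: (nat set \<Rightarrow> 'k) \<Rightarrow> _"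
    by (rule linear_bd)
  have "cycles F k = chains F k \<inter> {f. bd F f = (0 :: nat set \<Rightarrow> 'k)}"
    by (auto simp: cycles_def)
  then show ?thesis using fs.subspace_inter chains_subspace bd.subspace_kernel by metis
qed

lemma boundaries_subspace: "fs.subspace (boundaries F k :: (nat set \<Rightarrow> 'k::field) set)"
proof -
  interpret bd: Vector_Spaces.linear fscale fscale "bd F :: (nat set \<Rightarrow> 'k) \<Rightarrow> _"
    by (rule linear_bd)
  show ?thesis unfolding boundaries_def by (intro bd.subspace_image chains_subspace)
qed

context
  fixes V F assumes cx: "simplicial_complex V F"
begin

lemma boundaries_subset_cycles: "boundaries F k \<subseteq> cycles F k"
  using bd_chains[OF cx] bd_bd[OF cx] by (auto simp: boundaries_def cycles_def)

lemma cycles_subset_span: "cycles F k \<subseteq> fs.span (face_chain ` F)"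
  using chains_subset_span[OF finite_faces[OF cx]] by (auto simp: cycles_def)

lemma red_betti_eq_0I:
  assumes "cycles F k \<subseteq> (boundaries F k :: (nat set \<Rightarrow> 'k::field) set)"
  shows "red_betti TYPE('k) F k = 0"
proof -
  have "boundaries F k \<subseteq> fs.span (face_chain ` F :: (nat set \<Rightarrow> 'k) set)"
    using boundaries_subset_cycles cycles_subset_span by blast
  then show ?thesis
    using fs.dim_mono_in_span[OF assms] finite_faces[OF cx] by (simp add: red_betti_eq)
qed

lemma red_betti_eq_0_above_card:
  assumes "card V < k"
  shows "red_betti TYPE('k::field) F k = 0"
proof (rule red_betti_eq_0I)
  have "chains F k = {0 :: nat set \<Rightarrow> 'k}"
  proof -
    have "\<sigma> \<notin> F" if "card \<sigma> = k" for \<sigma>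
      using that assms cx card_mono[of V \<sigma>] unfolding simplicial_complex_def by fastforce
    then show ?thesis by (force simp: chains_def)
  qed
  then show "cycles F k \<subseteq> (boundaries F k :: (nat set \<Rightarrow> 'k) set)"
    using fs.subspace_0[OF boundaries_subspace] by (auto simp: cycles_def)
qed

end

lemma bd_restrict:
  assumes "simplicial_complex V G" "F \<subseteq> G" "f \<in> chains F k"
  shows "bd F f = bd G f"
proof
  fix \<tau>
  show "bd F f \<tau> = bd G f \<tau>"
    unfolding bd_eq_sum_ins_sign
    by (rule sum.mono_neutral_left) (use finite_extensions[OF assms(1)] assms(2,3) in \<open>auto simp: chains_def\<close>)
qed

lemma total_red_betti_eq_sum:
  assumes "finite V" "card V \<le> m"
  shows "total_red_betti TYPE('k::field) V E = (\<Sum>k\<le>m. red_betti TYPE('k) (indep_complex V E) k)"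
  unfolding total_red_betti_def atMost_atLeast0
  by (rule sum.mono_neutral_left)
    (use assms red_betti_eq_0_above_card[OF simplicial_complex_indep_complex[OF assms(1)], where 'k='k]
      in auto)

section \<open>Cones are acyclic\<close>

definition cone_chain :: "nat \<Rightarrow> (nat set \<Rightarrow> 'k::field) \<Rightarrow> nat set \<Rightarrow> 'k" where
  "cone_chain v f \<sigma> = (if v \<in> \<sigma> then ins_sign (\<sigma> - {v}) v * f (\<sigma> - {v}) else 0)"

lemma cone_chain_zero [simp]: "cone_chain v 0 = 0"
  by (simp add: cone_chain_def fun_eq_iff)

lemma cone_chain_chains:
  assumes "\<And>\<sigma>. \<sigma> \<in> G \<Longrightarrow> v \<notin> \<sigma> \<Longrightarrow> insert v \<sigma> \<in> F" "\<And>\<sigma>. \<sigma> \<in> G \<Longrightarrow> finite \<sigma>"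
    and "c \<in> chains G k"
  shows "cone_chain v c \<in> chains F (Suc k)"
  unfolding chains_def
proof (intro CollectI allI impI)
  fix \<sigma> assume "cone_chain v c \<sigma> \<noteq> 0"
  then have "v \<in> \<sigma>" "c (\<sigma> - {v}) \<noteq> 0" by (auto simp: cone_chain_def split: if_splits)
  moreover from this have "\<sigma> - {v} \<in> G" "card (\<sigma> - {v}) = k" using assms(3) by (auto simp: chains_def)
  ultimately show "\<sigma> \<in> F \<and> card \<sigma> = Suc k"
    using assms(1,2)[of "\<sigma> - {v}"] card_Suc_Diff1[of \<sigma> v] by (simp add: insert_absorb)
qed

context
  fixes V F v
  assumes cx: "simplicial_complex V F"
    and cone: "\<And>\<sigma>. v \<notin> \<sigma> \<Longrightarrow> insert v \<sigma> \<in> F \<longleftrightarrow> \<sigma> \<in> F"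
begin

lemma bd_cone_chain_off_apex:
  fixes f :: "nat set \<Rightarrow> 'k::field"
  assumes supp: "\<And>\<sigma>. f \<sigma> \<noteq> 0 \<Longrightarrow> \<sigma> \<in> F" and "v \<notin> \<tau>"
  shows "bd F (cone_chain v f) \<tau> = f \<tau>"
proof -
  let ?I = "{w. w \<notin> \<tau> \<and> insert w \<tau> \<in> F}"
  have "bd F (cone_chain v f) \<tau> = (\<Sum>w\<in>?I. if w = v then f \<tau> else 0)"
    unfolding bd_eq_sum_ins_sign
    by (rule sum.cong) (use \<open>v \<notin> \<tau>\<close> in \<open>auto simp: cone_chain_def mult.assoc[symmetric]\<close>)
  also have "\<dots> = (if v \<in> ?I then f \<tau> else 0)"
    using finite_extensions[OF cx] by simp
  also have "\<dots> = f \<tau>" using \<open>v \<notin> \<tau>\<close> cone supp by auto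
  finally show ?thesis .
qed

text \<open>At a face \<open>\<tau> = \<rho> \<union> {v}\<close> the terms of both sides indexed by \<open>w \<noteq> v\<close> cancel, and the
  term \<open>w = v\<close> of \<open>cone_chain v (bd F f)\<close> is \<open>f \<tau>\<close>.\<close>

lemma bd_cone_chain_at_apex:
  fixes f :: "nat set \<Rightarrow> 'k::field"
  assumes supp: "\<And>\<sigma>. f \<sigma> \<noteq> 0 \<Longrightarrow> \<sigma> \<in> F" and "v \<in> \<tau>"
  shows "bd F (cone_chain v f) \<tau> + cone_chain v (bd F f) \<tau> = f \<tau>"
proof -
  define \<rho> where "\<rho> = \<tau> - {v}"
  have \<tau>: "\<tau> = insert v \<rho>" "v \<notin> \<rho>" using \<open>v \<in> \<tau>\<close> by (auto simp: \<rho>_def)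
  let ?I = "{w. w \<notin> \<rho> \<and> insert w \<rho> \<in> F}"
  define g where "g w = ins_sign \<rho> v * (ins_sign \<rho> w * f (insert w \<rho>))" for w
  have "{w. w \<notin> \<tau> \<and> insert w \<tau> \<in> F} = ?I - {v}"
    using cone[of "insert _ \<rho>"] \<tau> by (auto simp: insert_commute)
  then have "bd F (cone_chain v f) \<tau> = (\<Sum>w\<in>?I - {v}. - g w)"
    unfolding bd_eq_sum_ins_sign
  proof (intro sum.cong)
    fix w assume w: "w \<in> ?I - {v}"
    have "finite \<rho>" using w finite_face[OF cx, of "insert w \<rho>"] by simp
    then have "(ins_sign \<tau> w * ins_sign (insert w \<rho>) v :: 'k) = - (ins_sign \<rho> v * ins_sign \<rho> w)"
      unfolding \<tau>(1) using w \<tau>(2) by (cases "v < w") (auto simp: ins_sign_insert)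
    moreover have "insert w \<tau> - {v} = insert w \<rho>" using \<tau> w by auto
    then have "ins_sign \<tau> w * cone_chain v f (insert w \<tau>)
        = (ins_sign \<tau> w * ins_sign (insert w \<rho>) v) * f (insert w \<rho>)"
      using \<open>v \<in> \<tau>\<close> by (simp add: cone_chain_def)
    ultimately show "ins_sign \<tau> w * cone_chain v f (insert w \<tau>) = - g w"
      by (simp add: g_def)
  qed
  moreover have "cone_chain v (bd F f) \<tau> = (\<Sum>w\<in>?I. g w)"
    using \<open>v \<in> \<tau>\<close> by (simp add: cone_chain_def \<rho>_def[symmetric] bd_eq_sum_ins_sign g_def sum_distrib_left)
  moreover have "(\<Sum>w\<in>?I. g w) = (if v \<in> ?I then f \<tau> else 0) + (\<Sum>w\<in>?I - {v}. g w)"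
  proof (cases "v \<in> ?I")
    case True
    moreover have "g v = f \<tau>" by (simp add: g_def \<tau>(1) mult.assoc[symmetric])
    ultimately show ?thesis using sum.remove[OF finite_extensions[OF cx] True, of g] by simp
  qed auto
  moreover have "(if v \<in> ?I then f \<tau> else 0) = f \<tau>" using supp \<tau> by auto
  ultimately show ?thesis by (simp add: sum_negf)
qed

lemma bd_cone_chain_add:
  fixes f :: "nat set \<Rightarrow> 'k::field"
  assumes "\<And>\<sigma>. f \<sigma> \<noteq> 0 \<Longrightarrow> \<sigma> \<in> F"
  shows "bd F (cone_chain v f) + cone_chain v (bd F f) = f"
proof
  fix \<tau>
  show "(bd F (cone_chain v f) + cone_chain v (bd F f)) \<tau> = f \<tau>"
  proof (cases "v \<in> \<tau>")
    case True
    then show ?thesis using bd_cone_chain_at_apex[OF assms] by simp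
  next
    case False
    then show ?thesis using bd_cone_chain_off_apex[OF assms] by (simp add: cone_chain_def)
  qed
qed

lemma red_betti_eq_0_of_cone: "red_betti TYPE('k::field) F k = 0"
proof (rule red_betti_eq_0I[OF cx], rule subsetI)
  fix z :: "nat set \<Rightarrow> 'k" assume "z \<in> cycles F k"
  then have z: "z \<in> chains F k" "bd F z = 0" by (auto simp: cycles_def)
  then have "bd F (cone_chain v z) + cone_chain v (bd F z) = z"
    by (intro bd_cone_chain_add) (auto simp: chains_def)
  then have "z = bd F (cone_chain v z)" using z(2) by simp
  moreover have "cone_chain v z \<in> chains F (Suc k)"
    using cone_chain_chains[OF _ finite_face[OF cx] z(1)] cone by blast
  ultimately show "z \<in> boundaries F k" by (auto simp: boundaries_def)
qed

end

section \<open>Deletion and link\<close>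

definition deletion :: "nat \<Rightarrow> nat set set \<Rightarrow> nat set set" where
  "deletion v F = {\<sigma> \<in> F. v \<notin> \<sigma>}"

definition link :: "nat \<Rightarrow> nat set set \<Rightarrow> nat set set" where
  "link v F = {\<sigma>. v \<notin> \<sigma> \<and> insert v \<sigma> \<in> F}"

lemma simplicial_complex_deletion:
  "simplicial_complex V F \<Longrightarrow> simplicial_complex V (deletion v F)"
  by (auto simp: simplicial_complex_def deletion_def)

lemma simplicial_complex_link:
  assumes "simplicial_complex V F"
  shows "simplicial_complex V (link v F)"
  unfolding simplicial_complex_def
proof (intro conjI allI impI)
  show "finite V" "link v F \<subseteq> Pow V"
    using assms by (auto simp: simplicial_complex_def link_def)
  fix \<sigma> \<tau> assume "\<sigma> \<in> link v F" "\<tau> \<subseteq> \<sigma>"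
  then show "\<tau> \<in> link v F"
    using face_subset[OF assms, of "insert v \<sigma>" "insert v \<tau>"] by (auto simp: link_def)
qed

lemma deletion_subset: "deletion v F \<subseteq> F"
  by (auto simp: deletion_def)

lemma link_subset: "simplicial_complex V F \<Longrightarrow> link v F \<subseteq> F"
  using face_subset[OF _ _ subset_insertI] by (auto simp: link_def)

text \<open>The quotient map of \<open>0 \<rightarrow> C(deletion v F) \<rightarrow> C(F) \<rightarrow> C(link v F)[-1] \<rightarrow> 0\<close>;
  it anticommutes with \<open>bd\<close> and is a left inverse of coning.\<close>

definition contract_chain :: "nat \<Rightarrow> (nat set \<Rightarrow> 'k::field) \<Rightarrow> nat set \<Rightarrow> 'k" where
  "contract_chain v f \<tau> = (if v \<in> \<tau> then 0 else ins_sign \<tau> v * f (insert v \<tau>))"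

lemma contract_chain_zero [simp]: "contract_chain v 0 = 0"
  by (simp add: contract_chain_def fun_eq_iff)

lemma linear_contract_chain:
  "Vector_Spaces.linear fscale fscale (contract_chain v :: (nat set \<Rightarrow> 'k::field) \<Rightarrow> _)"
  by unfold_locales (auto simp: contract_chain_def fun_eq_iff fscale_def algebra_simps)

context
  fixes V F and v :: nat
  assumes cx: "simplicial_complex V F"
begin

lemma contract_chain_chains:
  assumes "f \<in> chains F k"
  shows "contract_chain v f \<in> chains (link v F) (k - 1)"
  unfolding chains_def
proof (intro CollectI allI impI)
  fix \<tau> assume "contract_chain v f \<tau> \<noteq> 0"
  then have "v \<notin> \<tau>" "f (insert v \<tau>) \<noteq> 0" by (auto simp: contract_chain_def split: if_splits)
  moreover from this have "insert v \<tau> \<in> F" "card (insert v \<tau>) = k" using assms by (auto simp: chains_def)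
  ultimately show "\<tau> \<in> link v F \<and> card \<tau> = k - 1"
    using finite_face[OF cx \<open>insert v \<tau> \<in> F\<close>] by (auto simp: link_def)
qed

lemma contract_cone_chain:
  assumes "c \<in> chains (link v F) k"
  shows "contract_chain v (cone_chain v c) = c"
proof
  fix \<tau>
  have "c \<tau> = 0" if "v \<in> \<tau>" using assms that by (auto simp: chains_def link_def)
  then show "contract_chain v (cone_chain v c) \<tau> = c \<tau>"
    by (simp add: contract_chain_def cone_chain_def insert_absorb mult.assoc[symmetric])
qed

lemma contract_chain_bd:
  fixes f :: "nat set \<Rightarrow> 'k::field"
  shows "contract_chain v (bd F f) = - bd (link v F) (contract_chain v f)"
proof
  fix \<tau>
  show "contract_chain v (bd F f) \<tau> = (- bd (link v F) (contract_chain v f)) \<tau>"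
  proof (cases "v \<in> \<tau>")
    case True
    then show ?thesis by (simp add: contract_chain_def bd_eq_sum_ins_sign link_def)
  next
    case False
    let ?I = "{w. w \<notin> \<tau> \<and> insert w \<tau> \<in> link v F}"
    have I: "{w. w \<notin> insert v \<tau> \<and> insert w (insert v \<tau>) \<in> F} = ?I"
      using False by (auto simp: link_def insert_commute)
    have "contract_chain v (bd F f) \<tau> = ins_sign \<tau> v * bd F f (insert v \<tau>)"
      using False by (simp add: contract_chain_def)
    also have "\<dots> = (\<Sum>w\<in>?I. ins_sign \<tau> v * ins_sign (insert v \<tau>) w * f (insert w (insert v \<tau>)))"
      by (simp only: bd_eq_sum_ins_sign I sum_distrib_left mult.assoc)
    also have "\<dots> = (\<Sum>w\<in>?I. - (ins_sign \<tau> w * contract_chain v f (insert w \<tau>)))"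
    proof (rule sum.cong[OF refl])
      fix w assume w: "w \<in> ?I"
      then have "finite \<tau>" "w \<noteq> v" using finite_face[OF simplicial_complex_link[OF cx], of "insert w \<tau>"]
        by (auto simp: link_def)
      then have "(ins_sign \<tau> v * ins_sign (insert v \<tau>) w :: 'k) = - (ins_sign \<tau> w * ins_sign (insert w \<tau>) v)"
        using w False by (cases "v < w") (auto simp: ins_sign_insert)
      then show "ins_sign \<tau> v * ins_sign (insert v \<tau>) w * f (insert w (insert v \<tau>))
          = - (ins_sign \<tau> w * contract_chain v f (insert w \<tau>))"
        using \<open>w \<noteq> v\<close> False by (simp add: contract_chain_def insert_commute mult.assoc[symmetric])
    qed
    also have "\<dots> = (- bd (link v F) (contract_chain v f)) \<tau>"
      by (simp add: bd_eq_sum_ins_sign sum_negf)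
    finally show ?thesis .
  qed
qed

lemma chains_deletion_of_contract_eq_0:
  assumes "f \<in> chains F k" "contract_chain v f = 0"
  shows "f \<in> chains (deletion v F) k"
  unfolding chains_def
proof (intro CollectI allI impI)
  fix \<sigma> assume "f \<sigma> \<noteq> 0"
  moreover have "v \<notin> \<sigma>"
  proof
    assume "v \<in> \<sigma>"
    then have "contract_chain v f (\<sigma> - {v}) = ins_sign (\<sigma> - {v}) v * f \<sigma>"
      by (simp add: contract_chain_def insert_absorb)
    then show False using \<open>f \<sigma> \<noteq> 0\<close> assms(2)
      by (metis ins_sign_mult_self mult_eq_0_iff one_neq_zero zero_fun_apply)
  qed
  ultimately show "\<sigma> \<in> deletion v F \<and> card \<sigma> = k" using assms(1) by (auto simp: chains_def deletion_def)
qed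

lemma boundaries_deletion_subset:
  "boundaries (deletion v F) k \<subseteq> (boundaries F k :: (nat set \<Rightarrow> 'k::field) set)"
proof
  fix b :: "nat set \<Rightarrow> 'k" assume "b \<in> boundaries (deletion v F) k"
  then obtain c where "c \<in> chains (deletion v F) (Suc k)" "b = bd (deletion v F) c"
    by (auto simp: boundaries_def)
  moreover from this have "c \<in> chains F (Suc k)" using deletion_subset by (auto simp: chains_def)
  ultimately show "b \<in> boundaries F k"
    using bd_restrict[OF cx deletion_subset[of v]] by (auto simp: boundaries_def)
qed

lemma cycle_mod_boundary_in_deletion:
  fixes z :: "nat set \<Rightarrow> 'k::field"
  assumes z: "z \<in> cycles F (Suc j)" and "contract_chain v z \<in> boundaries (link v F) j"
  shows "\<exists>b\<in>boundaries F (Suc j). z - b \<in> cycles (deletion v F) (Suc j)"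
proof -
  interpret bd: Vector_Spaces.linear fscale fscale "bd F :: (nat set \<Rightarrow> 'k) \<Rightarrow> _"
    by (rule linear_bd)
  interpret contract: Vector_Spaces.linear fscale fscale "contract_chain v :: (nat set \<Rightarrow> 'k) \<Rightarrow> _"
    by (rule linear_contract_chain)
  obtain c where c: "c \<in> chains (link v F) (Suc j)" "contract_chain v z = bd (link v F) c"
    using assms(2) by (auto simp: boundaries_def)
  have cone: "cone_chain v c \<in> chains F (Suc (Suc j))"
    by (rule cone_chain_chains[OF _ _ c(1)])
      (auto simp: link_def dest: finite_face[OF cx])
  define b where "b = - bd F (cone_chain v c)"
  have "b \<in> boundaries F (Suc j)"
    using cone fs.subspace_neg[OF boundaries_subspace] unfolding b_def boundaries_def by blast
  moreover have "contract_chain v (z - b) = 0"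
    using contract_chain_bd[of "cone_chain v c"] contract_cone_chain[OF c(1)]
    by (simp add: b_def c(2) contract.add)
  moreover have "z - b \<in> chains F (Suc j)"
    using z bd_chains[OF cx cone] fs.subspace_add[OF chains_subspace] by (auto simp: b_def cycles_def)
  ultimately have del: "z - b \<in> chains (deletion v F) (Suc j)"
    by (intro chains_deletion_of_contract_eq_0)
  have "bd (deletion v F) (z - b) = 0"
    using z bd_bd[OF cx] bd_restrict[OF cx deletion_subset del] by (simp add: b_def cycles_def bd.add)
  with \<open>b \<in> boundaries F (Suc j)\<close> del show ?thesis by (auto simp: cycles_def)
qed

lemma red_betti_Suc_le_deletion_link:
  "red_betti TYPE('k::field) F (Suc j)
     \<le> red_betti TYPE('k) (deletion v F) (Suc j) + red_betti TYPE('k) (link v F) j"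
proof -
  have P: "contract_chain v ` cycles F (Suc j) \<subseteq> (cycles (link v F) j :: (nat set \<Rightarrow> 'k) set)"
  proof (rule image_subsetI)
    fix z :: "nat set \<Rightarrow> 'k" assume "z \<in> cycles F (Suc j)"
    then show "contract_chain v z \<in> cycles (link v F) j"
      using contract_chain_chains[of z "Suc j"] contract_chain_bd[of z] by (simp add: cycles_def)
  qed
  have W: "cycles G k \<subseteq> fs.span (face_chain ` F :: (nat set \<Rightarrow> 'k) set)" if "G \<subseteq> F" for G k
    using chains_subset_span[OF finite_faces[OF cx] that] by (auto simp: cycles_def)
  show ?thesis
    unfolding red_betti_eq
    by (rule fs.dim_quotient_le_of_exact[OF linear_contract_chain cycles_subspace boundaries_subspace
          boundaries_subspace cycles_subspace boundaries_subspace boundaries_subset_cycles[OF cx]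
          boundaries_subset_cycles[OF simplicial_complex_deletion[OF cx]]
          boundaries_subset_cycles[OF simplicial_complex_link[OF cx]] boundaries_deletion_subset P
          cycle_mod_boundary_in_deletion finite_imageI[OF finite_faces[OF cx]]
          W[OF order_refl] W[OF deletion_subset] W[OF link_subset[OF cx]]])
qed

lemma red_betti_0_le_deletion:
  "red_betti TYPE('k::field) F 0 \<le> red_betti TYPE('k) (deletion v F) 0"
proof -
  have "\<sigma> \<in> F \<and> card \<sigma> = 0 \<longleftrightarrow> \<sigma> \<in> deletion v F \<and> card \<sigma> = 0" for \<sigma>
    by (auto simp: deletion_def dest: finite_face[OF cx])
  then have "chains F 0 = (chains (deletion v F) 0 :: (nat set \<Rightarrow> 'k) set)"
    by (simp add: chains_def)
  moreover have "bd (deletion v F) f = bd F f" if "f \<in> chains (deletion v F) 0" for f :: "nat set \<Rightarrow> 'k"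
    using bd_restrict[OF cx deletion_subset that] .
  ultimately have "cycles F 0 = (cycles (deletion v F) 0 :: (nat set \<Rightarrow> 'k) set)"
    by (auto simp: cycles_def)
  moreover have "fs.dim (boundaries (deletion v F) 0 :: (nat set \<Rightarrow> 'k) set)
      \<le> fs.dim (boundaries F 0 :: (nat set \<Rightarrow> 'k) set)"
    by (rule fs.dim_mono_in_span[OF boundaries_deletion_subset
          order_trans[OF boundaries_subset_cycles[OF cx] cycles_subset_span[OF cx]]
          finite_imageI[OF finite_faces[OF cx]]])
  ultimately show ?thesis unfolding red_betti_eq by (metis diff_le_mono2)
qed

end

section \<open>Independence complexes\<close>

lemma deletion_indep_complex: "deletion v (indep_complex V E) = indep_complex (V - {v}) E"
  by (auto simp: deletion_def indep_complex_def)

context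
  fixes E :: "nat \<Rightarrow> nat \<Rightarrow> bool"
  assumes sym: "\<And>x y. E x y = E y x" and irrefl: "\<And>x. \<not> E x x"
begin

lemma link_indep_complex:
  assumes "v \<in> V"
  shows "link v (indep_complex V E) = indep_complex {u \<in> V. u \<noteq> v \<and> \<not> E v u} E"
  using assms sym irrefl by (auto simp: link_def indep_complex_def)

lemma insert_isolated_indep_complex:
  assumes "v \<in> V" "\<And>u. u \<in> V \<Longrightarrow> \<not> E v u" "v \<notin> \<sigma>"
  shows "insert v \<sigma> \<in> indep_complex V E \<longleftrightarrow> \<sigma> \<in> indep_complex V E"
  using assms sym irrefl by (auto simp: indep_complex_def)

lemma total_red_betti_eq_0_of_isolated:
  assumes "finite V" "v \<in> V" "\<And>u. u \<in> V \<Longrightarrow> \<not> E v u"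
  shows "total_red_betti TYPE('k::field) V E = 0"
  unfolding total_red_betti_def
  using red_betti_eq_0_of_cone[OF simplicial_complex_indep_complex[OF assms(1)]
      insert_isolated_indep_complex[OF assms(2,3)], where 'k='k]
  by simp

lemma total_red_betti_le_deletion_link:
  assumes "finite V"
  shows "total_red_betti TYPE('k::field) V E
    \<le> total_red_betti TYPE('k) (V - {v}) E + total_red_betti TYPE('k) {u \<in> V. u \<noteq> v \<and> \<not> E v u} E"
proof (cases "v \<in> V")
  case True
  let ?\<Delta> = "indep_complex V E" and ?r = "red_betti TYPE('k)"
  have cx: "simplicial_complex V ?\<Delta>" by (rule simplicial_complex_indep_complex[OF assms])
  obtain m where m: "card V = Suc m" using True assms by (metis card_Suc_Diff1)
  then have "card (V - {v}) \<le> Suc m" "card {u \<in> V. u \<noteq> v \<and> \<not> E v u} \<le> m"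
    using True assms card_mono[of "V - {v}" "{u \<in> V. u \<noteq> v \<and> \<not> E v u}"] by auto
  then have del: "total_red_betti TYPE('k) (V - {v}) E = (\<Sum>k\<le>Suc m. ?r (deletion v ?\<Delta>) k)"
    and lk: "total_red_betti TYPE('k) {u \<in> V. u \<noteq> v \<and> \<not> E v u} E = (\<Sum>j\<le>m. ?r (link v ?\<Delta>) j)"
    using assms by (simp_all add: total_red_betti_eq_sum deletion_indep_complex link_indep_complex[OF True])
  have "total_red_betti TYPE('k) V E = ?r ?\<Delta> 0 + (\<Sum>j\<le>m. ?r ?\<Delta> (Suc j))"
    using total_red_betti_eq_sum[OF assms, of "Suc m" E, where 'k='k] m
    by (simp del: sum.atMost_Suc add: sum.atMost_Suc_shift)
  also have "\<dots> \<le> ?r (deletion v ?\<Delta>) 0 + (\<Sum>j\<le>m. ?r (deletion v ?\<Delta>) (Suc j) + ?r (link v ?\<Delta>) j)"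
    using red_betti_0_le_deletion[OF cx] red_betti_Suc_le_deletion_link[OF cx]
    by (intro add_mono sum_mono)
  also have "\<dots> = total_red_betti TYPE('k) (V - {v}) E + total_red_betti TYPE('k) {u \<in> V. u \<noteq> v \<and> \<not> E v u} E"
    by (simp del: sum.atMost_Suc add: del lk sum.atMost_Suc_shift sum.distrib)
  finally show ?thesis .
qed simp

end

lemma total_red_betti_empty_le_1: "total_red_betti TYPE('k::field) {} E \<le> 1"
proof -
  have F: "indep_complex {} E = {{}}" by (auto simp: indep_complex_def)
  have "total_red_betti TYPE('k) {} E \<le> fs.dim (cycles {{}} 0 :: (nat set \<Rightarrow> 'k) set)"
    by (simp add: total_red_betti_def red_betti_eq F)
  also have "\<dots> \<le> card (face_chain ` {{}} :: (nat set \<Rightarrow> 'k) set)"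
    using cycles_subset_span[OF simplicial_complex_indep_complex[of "{}" E]] F
    by (intro fs.dim_le_card) auto
  finally show ?thesis by simp
qed

section \<open>Triangular paths\<close>

lemma tp_adj_sym: "tp_adj x y = tp_adj y x"
  by (auto simp: tp_adj_def)

lemma tp_adj_irrefl: "\<not> tp_adj x x"
  by (simp add: tp_adj_def)

lemmas tp_total_le_deletion_link = total_red_betti_le_deletion_link[of tp_adj, OF tp_adj_sym tp_adj_irrefl]
lemmas tp_total_eq_0_of_isolated = total_red_betti_eq_0_of_isolated[of tp_adj, OF tp_adj_sym tp_adj_irrefl]

abbreviation tp_betti :: "'k::field itself \<Rightarrow> nat \<Rightarrow> nat \<Rightarrow> nat" where
  "tp_betti K a n \<equiv> total_red_betti K {a+1..a+n} tp_adj"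

text \<open>Delete the vertices \<open>a+4, a+1, a+5, a+2\<close> in turn. The links of \<open>a+4\<close> and \<open>a+5\<close> and
  the final deletion each contain an isolated vertex (\<open>a+1\<close>, \<open>a+2\<close>, \<open>a+3\<close> respectively), so only
  the links of \<open>a+1\<close> and \<open>a+2\<close>, the paths on \<open>{a+5..a+n}\<close> and \<open>{a+6..a+n}\<close>, contribute.\<close>

lemma tp_betti_rec:
  assumes "3 \<le> n"
  shows "tp_betti TYPE('k::field) a n \<le> tp_betti TYPE('k) (a+4) (n-4) + tp_betti TYPE('k) (a+5) (n-5)"
proof -
  let ?t = "\<lambda>W. total_red_betti TYPE('k) W tp_adj"
  let ?L = "\<lambda>W v. {u \<in> W. u \<noteq> v \<and> \<not> tp_adj v u}"
  define V where "V = {a+1..a+n}"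
  define V1 where "V1 = V - {a+4}"
  define V2 where "V2 = V1 - {a+1}"
  define V3 where "V3 = V2 - {a+5}"
  have "?t V \<le> ?t V1 + ?t (?L V (a+4))"
    unfolding V1_def by (rule tp_total_le_deletion_link) (simp add: V_def)
  moreover have "?t (?L V (a+4)) = 0"
    by (rule tp_total_eq_0_of_isolated[where v="a+1"]) (use assms in \<open>auto simp: V_def tp_adj_def\<close>)
  moreover have "?t V1 \<le> ?t V2 + ?t (?L V1 (a+1))"
    unfolding V2_def by (rule tp_total_le_deletion_link) (simp add: V1_def V_def)
  moreover have "?L V1 (a+1) = {a+4+1..a+4+(n-4)}"
    using assms by (auto simp: V1_def V_def tp_adj_def)
  moreover have "?t V2 \<le> ?t V3 + ?t (?L V2 (a+5))"
    unfolding V3_def by (rule tp_total_le_deletion_link) (simp add: V2_def V1_def V_def)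
  moreover have "?t (?L V2 (a+5)) = 0"
    by (rule tp_total_eq_0_of_isolated[where v="a+2"])
      (use assms in \<open>auto simp: V2_def V1_def V_def tp_adj_def\<close>)
  moreover have "?t V3 \<le> ?t (V3 - {a+2}) + ?t (?L V3 (a+2))"
    by (rule tp_total_le_deletion_link) (simp add: V3_def V2_def V1_def V_def)
  moreover have "?t (V3 - {a+2}) = 0"
    by (rule tp_total_eq_0_of_isolated[where v="a+3"])
      (use assms in \<open>auto simp: V3_def V2_def V1_def V_def tp_adj_def\<close>)
  moreover have "?L V3 (a+2) = {a+5+1..a+5+(n-5)}"
    using assms by (auto simp: V3_def V2_def V1_def V_def tp_adj_def)
  ultimately show ?thesis unfolding V_def by simp
qed

lemma tp_betti_0: "tp_betti TYPE('k::field) a 0 \<le> 1"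
  using total_red_betti_empty_le_1[where 'k='k] by simp

lemma tp_betti_1: "tp_betti TYPE('k::field) a 1 = 0"
  by (rule tp_total_eq_0_of_isolated[where v="a+1"]) (auto simp: tp_adj_def)

lemma tp_betti_2: "tp_betti TYPE('k::field) a 2 \<le> 1"
proof -
  have "tp_betti TYPE('k) a 2 \<le> total_red_betti TYPE('k) ({a+1..a+2} - {a+1}) tp_adj
      + total_red_betti TYPE('k) {u \<in> {a+1..a+2}. u \<noteq> a+1 \<and> \<not> tp_adj (a+1) u} tp_adj"
    by (rule tp_total_le_deletion_link) simp
  moreover have "{u \<in> {a+1..a+2}. u \<noteq> a+1 \<and> \<not> tp_adj (a+1) u} = {}"
    by (auto simp: tp_adj_def)
  moreover have "total_red_betti TYPE('k) ({a+1..a+2} - {a+1}) tp_adj = 0"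
    by (rule tp_total_eq_0_of_isolated[where v="a+2"]) (auto simp: tp_adj_def)
  ultimately show ?thesis using total_red_betti_empty_le_1[where 'k='k and E=tp_adj] by (simp only:)
qed

lemma tp_betti_3: "tp_betti TYPE('k::field) a 3 \<le> 2"
  using tp_betti_rec[of 3 a, where 'k='k] tp_betti_0[of "a+4", where 'k='k] tp_betti_0[of "a+5", where 'k='k]
  by simp

lemma tp_betti_4: "tp_betti TYPE('k::field) a 4 \<le> 2"
  using tp_betti_rec[of 4 a, where 'k='k] tp_betti_0[of "a+4", where 'k='k] tp_betti_0[of "a+5", where 'k='k]
  by simp

lemma tp_betti_7: "tp_betti TYPE('k::field) a 7 \<le> 3"
  using tp_betti_rec[of 7 a, where 'k='k] tp_betti_3[of "a+4", where 'k='k] tp_betti_2[of "a+5", where 'k='k]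
  by simp

lemma tp_betti_8: "tp_betti TYPE('k::field) a 8 \<le> 4"
  using tp_betti_rec[of 8 a, where 'k='k] tp_betti_4[of "a+4", where 'k='k] tp_betti_3[of "a+5", where 'k='k]
  by simp

lemma three_le_two_powr_7_4: "3 \<le> (2::real) powr (7/4)"
proof -
  have "((2::real) powr (7/4)) ^ 4 = 2 ^ 7"
    using powr_power[of "2::real" "7/4" 4] powr_realpow[of "2::real" 7] by simp
  then have "(3::real) ^ 4 \<le> (2 powr (7/4)) ^ 4" by simp
  then show ?thesis using power_mono_iff[of "3::real" "2 powr (7/4)" 4] by simp
qed

lemma two_powr_rec: "(2::real) powr (x - 1) + 2 powr (x - 5/4) \<le> 2 powr x"
proof -
  have "(2::real) powr (x - 5/4) \<le> 2 powr (x - 1)" by simp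
  moreover have "2 * (2::real) powr (x - 1) = 2 powr x"
    using powr_add[of 2 1 "x - 1"] by simp
  ultimately show ?thesis by linarith
qed

lemma tp_betti_le_powr: "n \<noteq> 3 \<Longrightarrow> real (tp_betti TYPE('k::field) a n) \<le> 2 powr (real n / 4)"
proof (induction n arbitrary: a rule: less_induct)
  case (less n)
  have one_le: "1 \<le> (2::real) powr (real n / 4)" by (rule ge_one_powr_ge_zero) simp_all
  show ?case
  proof (cases "5 \<le> n \<and> n \<noteq> 7 \<and> n \<noteq> 8")
    case True
    then have "n - 4 < n" "n - 4 \<noteq> 3" "n - 5 < n" "n - 5 \<noteq> 3" by auto
    then have "real (tp_betti TYPE('k) a n) \<le> 2 powr (real (n-4) / 4) + 2 powr (real (n-5) / 4)"
      using tp_betti_rec[of n a, where 'k='k] less.IH[of "n-4" "a+4"] less.IH[of "n-5" "a+5"] True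
      by linarith
    also have "\<dots> = 2 powr (real n / 4 - 1) + 2 powr (real n / 4 - 5/4)"
      using True by (simp add: diff_divide_distrib)
    also have "\<dots> \<le> 2 powr (real n / 4)" by (rule two_powr_rec)
    finally show ?thesis .
  next
    case False
    then consider "n = 0" | "n = 1" | "n = 2" | "n = 4" | "n = 7" | "n = 8"
      using less.prems by linarith
    then show ?thesis
    proof cases
      case 1
      then show ?thesis using tp_betti_0[of a, where 'k='k] one_le by simp
    next
      case 2
      then show ?thesis using tp_betti_1[of a, where 'k='k] by simp
    next
      case 3
      then show ?thesis using tp_betti_2[of a, where 'k='k] one_le by simp
    next
      case 4
      then show ?thesis using tp_betti_4[of a, where 'k='k] by simp
    next
      case 5
      then show ?thesis using tp_betti_7[of a, where 'k='k] three_le_two_powr_7_4 by simp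
    next
      case 6
      then show ?thesis using tp_betti_8[of a, where 'k='k] by simp
    qed
  qed
qed

lemma indep_complex_tp_3: "indep_complex {1..3} tp_adj = {{}, {1}, {2}, {3}}"
proof (intro equalityI subsetI)
  fix \<sigma> assume "\<sigma> \<in> indep_complex {1..3} tp_adj"
  then have \<sigma>: "\<sigma> \<subseteq> {1..3}" "\<forall>x\<in>\<sigma>. \<forall>y\<in>\<sigma>. \<not> tp_adj x y" by (auto simp: indep_complex_def)
  have "x = y" if "x \<in> \<sigma>" "y \<in> \<sigma>" for x y
  proof -
    have "x \<in> {1..3}" "y \<in> {1..3}" using that \<sigma>(1) by auto
    then have "\<bar>int x - int y\<bar> \<le> 2" by auto
    then show ?thesis using \<sigma>(2) that by (auto simp: tp_adj_def)
  qed
  then have "\<sigma> = {} \<or> (\<exists>x. \<sigma> = {x})" by blast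
  then show "\<sigma> \<in> {{}, {1}, {2}, {3}}" using \<sigma>(1) by auto
qed (auto simp: indep_complex_def tp_adj_def)

lemma two_le_total_red_betti_tp_3: "2 \<le> total_red_betti TYPE('k::field) {1..3} tp_adj"
proof -
  define F where "F = indep_complex {1..3} tp_adj"
  have cx: "simplicial_complex {1..3} F" unfolding F_def by (rule simplicial_complex_indep_complex) simp
  have faces: "F = {{}, {1}, {2}, {3}}" unfolding F_def by (rule indep_complex_tp_3)
  define e1 where "e1 = face_chain {1} - (face_chain {2} :: nat set \<Rightarrow> 'k)"
  define e2 where "e2 = face_chain {2} - (face_chain {3} :: nat set \<Rightarrow> 'k)"
  have ext: "{w. w \<notin> \<tau> \<and> insert w \<tau> \<in> F} = (if \<tau> = {} then {1, 2, 3} else {})" for \<tau>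
    by (auto simp: faces)
  have "e1 \<in> chains F 1" "e2 \<in> chains F 1"
    by (auto simp: chains_def e1_def e2_def face_chain_def faces)
  moreover have "bd F e1 = 0" "bd F e2 = 0"
    by (simp_all add: fun_eq_iff bd_eq_sum_ins_sign ext e1_def e2_def face_chain_def)
  ultimately have "e1 \<in> cycles F 1" "e2 \<in> cycles F 1" by (simp_all add: cycles_def)
  then have span: "fs.span {e1, e2} \<subseteq> cycles F 1" by (intro fs.span_minimal) (auto intro: cycles_subspace)
  have e1: "e1 {1} = 1" "e2 {1} = 0" "e2 {2} = 1" by (simp_all add: e1_def e2_def face_chain_def)
  then have "e1 \<notin> fs.span {e2}" "e2 \<noteq> 0"
    by (auto simp: fs.span_singleton fscale_def fun_eq_iff intro!: exI[of _ "{2}"])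
  then have "fs.independent {e1, e2}" by (simp add: fs.independent_insert)
  then have "card {e1, e2} = fs.dim (fs.span {e1, e2})" by (rule fs.dim_span_eq_card_independent[symmetric])
  also have "\<dots> \<le> fs.dim (cycles F 1 :: (nat set \<Rightarrow> 'k) set)"
    by (rule fs.dim_mono_in_span[OF span cycles_subset_span[OF cx] finite_imageI[OF finite_faces[OF cx]]])
  moreover have "e1 \<noteq> e2" using e1 by force
  ultimately have Z: "2 \<le> fs.dim (cycles F 1 :: (nat set \<Rightarrow> 'k) set)" by simp
  have no_edge_chains: "c = 0" if "c \<in> chains F (Suc 1)" for c :: "nat set \<Rightarrow> 'k"
  proof
    fix \<sigma> show "c \<sigma> = 0 \<sigma>" using that by (auto simp: chains_def faces)
  qed
  then have "chains F (Suc 1) = {0 :: nat set \<Rightarrow> 'k}"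
    using fs.subspace_0[OF chains_subspace] by blast
  then have "boundaries F 1 = {0 :: nat set \<Rightarrow> 'k}" by (simp add: boundaries_def)
  then have "fs.dim (boundaries F 1 :: (nat set \<Rightarrow> 'k) set) = 0"
    using fs.dim_le_card[of "{0}" "{}"] by simp
  with Z have "2 \<le> red_betti TYPE('k) F 1" by (simp add: red_betti_eq)
  also have "\<dots> \<le> total_red_betti TYPE('k) {1..3} tp_adj"
    unfolding total_red_betti_def F_def by (rule member_le_sum) auto
  finally show ?thesis .
qed

theorem lemmaA20:
  shows "(\<forall>n::nat. n \<noteq> 3 \<longrightarrow>
            real (total_red_betti TYPE('k::field) {1..n} tp_adj) \<le> 2 powr (real n / 4))
         \<and> total_red_betti TYPE('k::field) {1..3} tp_adj = 2"
  using tp_betti_le_powr[of _ 0, where 'k='k] tp_betti_3[of 0, where 'k='k] two_le_total_red_betti_tp_3[where 'k='k]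
  by simp

end
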